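(* There is an isomorphism of abelian groups \[ C_2^{\rm SLB}(X)\cong\bigoplus_{\substack{a,b,c\in\mathbb Z_p,\ a\ne b,\ b\ne c,\\ (a,b,c,[a,b,c])=\min Q(a,b,c)}}\mathbb Z\big\langle((a,b),(a,c))\big\rangle\ \oplus\bigoplus_{\substack{a,b\in\mathbb Z_p,\ a<b}}\mathbb Z_2\big\langle((a,a),(a,b))\big\rangle, \] and \[ C_1^{\rm SLB}(X)\cong\bigoplus_{\substack{a,b\in\mathbb Z_p,\ a<b}}\mathbb Z\langle(a,b)\rangle\ \oplus\ \bigoplus_{a\in\mathbb Z_p}\mathbb Z_2\langle(a,a)\rangle, \] where $Q(a,b,c)=\{(a,b,c,[a,b,c]),\ (b,a,[a,b,c],c),\ (c,[a,b,c],a,b),\ ([a,b,c],c,b,a)\}\subset\mathbb Z_p^4$, $\mathbb Z\langle x\rangle$ denotes an infinite cyclic group generated by (the class of) $x$ and $\mathbb Z_2\langle x\rangle$ a cyclic group of order $2$ generated by (the class of) $x$.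
   Context: Let $p$ be an odd prime, $X=\mathbb Z_p$, and $[a,b,c]=a-b+c$. Let $\rho((a,b))=(b,a)$, $(a,b)\,\underline{\star}\,(a,c)=(c,[a,b,c])$, $(a,b)\,\overline{\star}\,(a,c)=(c,[a,c,b])$. For $n\ge1$ let $C_n^{\rm lb}(X)$ be the free abelian group on tuples $((a,b_1),\dots,(a,b_n))$, $a,b_i\in X$. Let $D_n^{\rm lb}(X)$ be the subgroup generated by tuples with $b_i=b_{i+1}$ for some $i\in\{1,\dots,n-1\}$, and $D_n^{\rm lb}(X,\rho)$ the subgroup generated by all elements $((a,b_1),\dots,(a,b_n))+((a,b_1)\underline\star(a,b_i),\dots,(a,b_{i-1})\underline\star(a,b_i),\rho((a,b_i)),(a,b_{i+1})\overline\star(a,b_i),\dots,(a,b_n)\overline\star(a,b_i))$, $i\in\{1,\dots,n\}$. Define $C_n^{\rm SLB}(X)=C_n^{\rm lb}(X)/(D_n^{\rm lb}(X)+D_n^{\rm lb}(X,\rho))$. Elements of $\mathbb Z_p$ are represented by the integers $0,1,\dots,p-1$, and $<$ on $\mathbb Z_p$ is the usual order of these representatives; $\mathbb Z_p^4$ is ordered lexicographically: $(a_1,\dots,a_4)<(b_1,\dots,b_4)$ iff $a_j<b_j$ for the least $j$ with $a_j\ne b_j$. $\min Q$ refers to this order. *)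

theory Defs
  imports "HOL-Algebra.Free_Abelian_Groups" "HOL-Computational_Algebra.Primes"
begin

text \<open>X = Z_p, with elements represented by the integers 0,...,p-1.\<close>

definition Zp :: "int \<Rightarrow> int set" where
  "Zp p = {0..<p}"

text \<open>The heap operation [a,b,c] = a - b + c in Z_p.\<close>
definition br :: "int \<Rightarrow> int \<Rightarrow> int \<Rightarrow> int \<Rightarrow> int" where
  "br p a b c = (a - b + c) mod p"

definition rho :: "int \<times> int \<Rightarrow> int \<times> int" where
  "rho x = (snd x, fst x)"

text \<open>(a,b) under-star (a,c) = (c,[a,b,c]);  (a,b) over-star (a,c) = (c,[a,c,b]).\<close>
definition ustar :: "int \<Rightarrow> int \<times> int \<Rightarrow> int \<times> int \<Rightarrow> int \<times> int" where
  "ustar p x y = (snd y, br p (fst x) (snd x) (snd y))"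

definition ostar :: "int \<Rightarrow> int \<times> int \<Rightarrow> int \<times> int \<Rightarrow> int \<times> int" where
  "ostar p x y = (snd y, br p (fst x) (snd y) (snd x))"

text \<open>Generators of C_n^lb(X): tuples ((a,b_1),...,(a,b_n)), as lists of length n.\<close>
definition LB :: "int \<Rightarrow> nat \<Rightarrow> (int \<times> int) list set" where
  "LB p n = {xs. length xs = n \<and> (\<exists>a \<in> Zp p. \<forall>x \<in> set xs. fst x = a \<and> snd x \<in> Zp p)}"

definition C_lb :: "int \<Rightarrow> nat \<Rightarrow> ((int \<times> int) list \<Rightarrow>\<^sub>0 int) monoid" where
  "C_lb p n = free_Abelian_group (LB p n)"

text \<open>Generators of D_n^lb(X): tuples with b_i = b_(i+1) for some i (0-indexed here).\<close>
definition D_lb_gens :: "int \<Rightarrow> nat \<Rightarrow> ((int \<times> int) list \<Rightarrow>\<^sub>0 int) set" where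
  "D_lb_gens p n = {frag_of xs | xs. xs \<in> LB p n \<and>
      (\<exists>i. i + 1 < n \<and> snd (xs ! i) = snd (xs ! (i + 1)))}"

text \<open>The tuple ((a,b_1) under-star (a,b_i), ..., rho(a,b_i), ..., (a,b_n) over-star (a,b_i)),
  with position i given 0-indexed.\<close>
definition act :: "int \<Rightarrow> nat \<Rightarrow> (int \<times> int) list \<Rightarrow> (int \<times> int) list" where
  "act p i xs = map (\<lambda>x. ustar p x (xs ! i)) (take i xs) @ [rho (xs ! i)]
                 @ map (\<lambda>x. ostar p x (xs ! i)) (drop (Suc i) xs)"

definition D_rho_gens :: "int \<Rightarrow> nat \<Rightarrow> ((int \<times> int) list \<Rightarrow>\<^sub>0 int) set" where
  "D_rho_gens p n = {frag_of xs + frag_of (act p i xs) | xs i. xs \<in> LB p n \<and> i < n}"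

text \<open>D_n^lb(X) + D_n^lb(X,rho), the subgroup generated by both generating sets.\<close>
definition D_SLB :: "int \<Rightarrow> nat \<Rightarrow> ((int \<times> int) list \<Rightarrow>\<^sub>0 int) set" where
  "D_SLB p n = generate (C_lb p n) (D_lb_gens p n \<union> D_rho_gens p n)"

definition C_SLB :: "int \<Rightarrow> nat \<Rightarrow> ((int \<times> int) list \<Rightarrow>\<^sub>0 int) set monoid" where
  "C_SLB p n = C_lb p n Mod D_SLB p n"

definition cls :: "int \<Rightarrow> nat \<Rightarrow> (int \<times> int) list \<Rightarrow> ((int \<times> int) list \<Rightarrow>\<^sub>0 int) set" where
  "cls p n xs = D_SLB p n #>\<^bsub>C_lb p n\<^esub> frag_of xs"

definition lex4_less :: "int \<times> int \<times> int \<times> int \<Rightarrow> int \<times> int \<times> int \<times> int \<Rightarrow> bool" where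
  "lex4_less x y = (case x of (a1,a2,a3,a4) \<Rightarrow> case y of (b1,b2,b3,b4) \<Rightarrow>
      a1 < b1 \<or> (a1 = b1 \<and> (a2 < b2 \<or> (a2 = b2 \<and> (a3 < b3 \<or> (a3 = b3 \<and> a4 < b4))))))"

definition lex4_le :: "int \<times> int \<times> int \<times> int \<Rightarrow> int \<times> int \<times> int \<times> int \<Rightarrow> bool" where
  "lex4_le x y = (x = y \<or> lex4_less x y)"

definition is_lexmin :: "int \<times> int \<times> int \<times> int \<Rightarrow> (int \<times> int \<times> int \<times> int) set \<Rightarrow> bool" where
  "is_lexmin x Q = (x \<in> Q \<and> (\<forall>y \<in> Q. lex4_le x y))"

definition Qset :: "int \<Rightarrow> int \<Rightarrow> int \<Rightarrow> int \<Rightarrow> (int \<times> int \<times> int \<times> int) set" where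
  "Qset p a b c = (let d = br p a b c in
     {(a, b, c, d), (b, a, d, c), (c, d, a, b), (d, c, b, a)})"

text \<open>G is isomorphic to (direct sum over Zs of Z) + (direct sum over Ts of Z_2), via an
  isomorphism sending the standard generator of the summand indexed by x to g x.\<close>
definition unit_vec :: "'x set \<Rightarrow> 'x \<Rightarrow> 'x \<Rightarrow> int" where
  "unit_vec I k = (\<lambda>i\<in>I. if i = k then 1 else 0)"

definition Z_Z2_sum :: "'x set \<Rightarrow> 'x set \<Rightarrow> ('x + 'x \<Rightarrow> int) monoid" where
  "Z_Z2_sum Zs Ts = sum_group (Inl ` Zs \<union> Inr ` Ts)
      (\<lambda>k. case k of Inl _ \<Rightarrow> integer_group | Inr _ \<Rightarrow> integer_mod_group 2)"

definition cyclic_decomp :: "('g, 'm) monoid_scheme \<Rightarrow> ('x \<Rightarrow> 'g) \<Rightarrow> 'x set \<Rightarrow> 'x set \<Rightarrow> bool" where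
  "cyclic_decomp G g Zs Ts \<longleftrightarrow>
     (\<exists>\<phi>. \<phi> \<in> iso (Z_Z2_sum Zs Ts) G
        \<and> (\<forall>x \<in> Zs. \<phi> (unit_vec (Inl ` Zs \<union> Inr ` Ts) (Inl x)) = g x)
        \<and> (\<forall>x \<in> Ts. \<phi> (unit_vec (Inl ` Zs \<union> Inr ` Ts) (Inr x)) = g x))"

end

theory Submission
  imports Defs "HOL-Library.Product_Lexorder"
begin

text \<open>
  In both degrees every generator is congruent, modulo the relations, to 0 (degenerate tuples)
  or to plus or minus a canonical representative.  In degree 1 the \<rho>-relation identifies
  (a,b) with -(b,a).  In degree 2 the two \<rho>-relations act on the generators as a Klein
  four-group whose orbits are the sets Q(a,b,c), each of its generators reversing the sign, and
  the representative is the lexicographic minimum of the orbit.  The coefficients of this normal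
  form map the free group onto the sum of copies of \<int> and \<int>/2: a \<rho>-relator is sent to 0,
  because its two terms cancel, unless its generator is fixed by the \<rho>-action (a = b), when
  it becomes twice a representative.  Since every element is congruent to its normal form, the
  kernel is exactly the relation subgroup.
\<close>

section \<open>Quotients of free Abelian groups with a normal form\<close>

lemma frag_cmul_2: "frag_cmul 2 x = x + x"
  using frag_cmul_distrib[of 1 1 x] by simp

lemma subgroup_free_Abelian_group_diff_closed:
  assumes D: "subgroup D (free_Abelian_group S)" and "x \<in> D" "y \<in> D"
  shows "x - y \<in> D"
proof -
  have "y \<in> carrier (free_Abelian_group S)"
    using subgroup.subset[OF D] \<open>y \<in> D\<close> ..
  moreover have "x \<otimes>\<^bsub>free_Abelian_group S\<^esub> inv\<^bsub>free_Abelian_group S\<^esub> y \<in> D"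
    by (rule subgroup.m_closed[OF D \<open>x \<in> D\<close> subgroup.m_inv_closed[OF D \<open>y \<in> D\<close>]])
  ultimately show ?thesis
    by simp
qed

lemma subgroup_free_Abelian_group_cmul_closed:
  assumes D: "subgroup D (free_Abelian_group S)" and "x \<in> D"
  shows "frag_cmul k x \<in> D"
  by (rule frag_closure_minus_cmul[where P = "\<lambda>x. x \<in> D"])
    (use assms subgroup.one_closed[OF D] subgroup_free_Abelian_group_diff_closed[OF D] in auto)

lemma subgroup_free_Abelian_group_sum_closed:
  assumes D: "subgroup D (free_Abelian_group S)" and "\<And>i. i \<in> A \<Longrightarrow> u i \<in> D"
  shows "sum u A \<in> D"
  using assms(2)
proof (induction A rule: infinite_finite_induct)
  case (insert i A)
  then show ?case
    using subgroup.m_closed[OF D, of "u i" "sum u A"] by simp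
qed (use subgroup.one_closed[OF D] in simp_all)

lemma group_Z_Z2_sum: "group (Z_Z2_sum Zs Ts)"
  unfolding Z_Z2_sum_def by (rule sum_group) (auto split: sum.splits)

lemma carrier_Z_Z2_sum:
  assumes "finite Zs" "finite Ts"
  shows "carrier (Z_Z2_sum Zs Ts)
    = (\<Pi>\<^sub>E k\<in>Inl ` Zs \<union> Inr ` Ts. case k of Inl _ \<Rightarrow> UNIV | Inr _ \<Rightarrow> {0..<2})"
proof -
  have groups: "group (case k of Inl _ \<Rightarrow> integer_group | Inr _ \<Rightarrow> integer_mod_group 2)" for k
    by (cases k) auto
  have carriers: "carrier (case k of Inl _ \<Rightarrow> integer_group | Inr _ \<Rightarrow> integer_mod_group 2)
      = (case k of Inl _ \<Rightarrow> UNIV | Inr _ \<Rightarrow> {0..<2})" for k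
    by (cases k) (auto simp: carrier_integer_mod_group)
  have "finite (Inl ` Zs \<union> Inr ` Ts)"
    using assms by simp
  then show ?thesis
    unfolding Z_Z2_sum_def carrier_sum_group[OF groups] by (simp only: carriers) (auto intro: rev_finite_subset)
qed

lemma one_Z_Z2_sum: "\<one>\<^bsub>Z_Z2_sum Zs Ts\<^esub> = (\<lambda>k\<in>Inl ` Zs \<union> Inr ` Ts. 0)"
  unfolding Z_Z2_sum_def one_sum_group by (intro restrict_ext) (auto split: sum.splits)

lemma cyclic_decomp_FactGroup:
  fixes Zs Ts :: "'x set" and h :: "'g \<Rightarrow> 'x + 'x \<Rightarrow> int"
  defines "H \<equiv> Z_Z2_sum Zs Ts" and "I \<equiv> Inl ` Zs \<union> Inr ` Ts"
  assumes G: "group G" and h: "h \<in> hom G H" and onto: "h ` carrier G = carrier H"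
    and g: "g ` (Zs \<union> Ts) \<subseteq> carrier G"
    and h_Zs: "\<And>x. x \<in> Zs \<Longrightarrow> h (g x) = unit_vec I (Inl x)"
    and h_Ts: "\<And>x. x \<in> Ts \<Longrightarrow> h (g x) = unit_vec I (Inr x)"
  shows "cyclic_decomp (G Mod kernel G H h) (\<lambda>x. kernel G H h #>\<^bsub>G\<^esub> g x) Zs Ts"
proof -
  let ?K = "kernel G H h"
  interpret group_hom G H h
    unfolding group_hom_def group_hom_axioms_def H_def using G h group_Z_Z2_sum H_def by blast
  define \<phi> where "\<phi> = inv_into (carrier (G Mod ?K)) (\<lambda>X. the_elem (h ` X))"
  have "\<phi> \<in> iso H (G Mod ?K)"
    unfolding \<phi>_def
    by (rule group.iso_set_sym[OF normal.factorgroup_is_group[OF normal_kernel] FactGroup_iso_set[OF onto]])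
  moreover have "\<phi> (h (g x)) = ?K #>\<^bsub>G\<^esub> g x" if "x \<in> Zs \<union> Ts" for x
  proof -
    have gx: "g x \<in> carrier G"
      using g that by blast
    then have "h ` (?K #>\<^bsub>G\<^esub> g x) = {h (g x)}"
      by (auto simp add: kernel_def r_coset_def intro!: imageI)
    moreover have "?K #>\<^bsub>G\<^esub> g x \<in> carrier (G Mod ?K)"
      using gx by (auto simp: FactGroup_def RCOSETS_def)
    ultimately show ?thesis
      unfolding \<phi>_def by (intro inv_into_f_eq[OF FactGroup_inj_on]) simp_all
  qed
  ultimately show ?thesis
    unfolding cyclic_decomp_def H_def[symmetric] I_def[symmetric]
    by (intro exI[of _ \<phi>] conjI ballI) (simp_all flip: h_Zs h_Ts)
qed

locale normal_form_presentation =
  fixes S :: "'a set" and R :: "('a \<Rightarrow>\<^sub>0 int) set" and Zs Ts :: "'a set"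
    and \<nu> :: "'a \<Rightarrow> 'a \<Rightarrow>\<^sub>0 int"
  assumes finite_Zs: "finite Zs" and finite_Ts: "finite Ts"
    and Zs_subset: "Zs \<subseteq> S" and Ts_subset: "Ts \<subseteq> S" and Zs_Ts_disjoint: "Zs \<inter> Ts = {}"
    and relators_subset: "R \<subseteq> carrier (free_Abelian_group S)"
    and keys_normal_form: "x \<in> S \<Longrightarrow> Poly_Mapping.keys (\<nu> x) \<subseteq> Zs \<union> Ts"
    and normal_form_basis: "z \<in> Zs \<union> Ts \<Longrightarrow> \<nu> z = frag_of z"
    and normal_form_congruent:
      "x \<in> S \<Longrightarrow> frag_of x - \<nu> x \<in> generate (free_Abelian_group S) R"
    and relator_Zs: "\<lbrakk>r \<in> R; z \<in> Zs\<rbrakk> \<Longrightarrow> Poly_Mapping.lookup (frag_extend \<nu> r) z = 0"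
    and relator_Ts: "\<lbrakk>r \<in> R; t \<in> Ts\<rbrakk> \<Longrightarrow> even (Poly_Mapping.lookup (frag_extend \<nu> r) t)"
    and Ts_torsion: "t \<in> Ts \<Longrightarrow> frag_cmul 2 (frag_of t) \<in> generate (free_Abelian_group S) R"
begin

abbreviation "G \<equiv> free_Abelian_group S"

abbreviation "D \<equiv> generate G R"

abbreviation "H \<equiv> Z_Z2_sum Zs Ts"

abbreviation "I \<equiv> Inl ` Zs \<union> Inr ` Ts"

definition coords :: "('a \<Rightarrow>\<^sub>0 int) \<Rightarrow> 'a + 'a \<Rightarrow> int" where
  "coords f = (\<lambda>k\<in>I. case k of Inl z \<Rightarrow> Poly_Mapping.lookup (frag_extend \<nu> f) z
                             | Inr t \<Rightarrow> Poly_Mapping.lookup (frag_extend \<nu> f) t mod 2)"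

lemma subgroup_D: "subgroup D G"
  using group.generate_is_subgroup[OF group_free_Abelian_group relators_subset] .

lemma coords_hom: "coords \<in> hom G H"
proof (rule homI)
  show "coords f \<in> carrier H" for f
    unfolding carrier_Z_Z2_sum[OF finite_Zs finite_Ts] coords_def by (auto split: sum.splits)
  show "coords (f \<otimes>\<^bsub>G\<^esub> g) = coords f \<otimes>\<^bsub>H\<^esub> coords g" for f g
    unfolding Z_Z2_sum_def mult_sum_group mult_free_Abelian_group coords_def
    by (auto simp: frag_extend_add lookup_add mod_add_eq split: sum.splits)
qed

lemma frag_extend_normal_form_id:
  assumes "Poly_Mapping.keys f \<subseteq> Zs \<union> Ts"
  shows "frag_extend \<nu> f = f"
proof -
  have "frag_extend \<nu> f = frag_extend frag_of f"
    using assms normal_form_basis by (intro frag_extend_eq) blast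
  then show ?thesis
    by (simp flip: frag_expansion)
qed

lemma coords_frag_of_Zs: "z \<in> Zs \<Longrightarrow> coords (frag_of z) = unit_vec I (Inl z)"
  unfolding coords_def unit_vec_def
  by (intro restrict_ext) (use Zs_Ts_disjoint in \<open>auto simp: normal_form_basis split: sum.splits\<close>)

lemma coords_frag_of_Ts: "t \<in> Ts \<Longrightarrow> coords (frag_of t) = unit_vec I (Inr t)"
  unfolding coords_def unit_vec_def
  by (intro restrict_ext) (use Zs_Ts_disjoint in \<open>auto simp: normal_form_basis split: sum.splits\<close>)

lemma coords_eq_one_iff:
  "coords f = \<one>\<^bsub>H\<^esub> \<longleftrightarrow>
     (\<forall>z\<in>Zs. Poly_Mapping.lookup (frag_extend \<nu> f) z = 0) \<and>
     (\<forall>t\<in>Ts. even (Poly_Mapping.lookup (frag_extend \<nu> f) t))"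
    (is "_ \<longleftrightarrow> ?vanish")
proof
  assume one: "coords f = \<one>\<^bsub>H\<^esub>"
  have "Poly_Mapping.lookup (frag_extend \<nu> f) z = 0" if "z \<in> Zs" for z
    using fun_cong[OF one, of "Inl z"] that by (simp add: coords_def one_Z_Z2_sum)
  moreover have "even (Poly_Mapping.lookup (frag_extend \<nu> f) t)" if "t \<in> Ts" for t
    using fun_cong[OF one, of "Inr t"] that
    by (simp add: coords_def one_Z_Z2_sum even_iff_mod_2_eq_zero)
  ultimately show ?vanish
    by blast
next
  assume ?vanish
  then show "coords f = \<one>\<^bsub>H\<^esub>"
    unfolding coords_def one_Z_Z2_sum
    by (intro restrict_ext) (auto simp: even_iff_mod_2_eq_zero)
qed

lemma coords_basis_combination:
  assumes v: "v \<in> carrier H"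
  defines "f \<equiv> (\<Sum>z\<in>Zs. frag_cmul (v (Inl z)) (frag_of z)) + (\<Sum>t\<in>Ts. frag_cmul (v (Inr t)) (frag_of t))"
  shows "f \<in> carrier G" "coords f = v"
proof -
  have keys: "Poly_Mapping.keys f \<subseteq> Zs \<union> Ts"
    unfolding f_def by (intro order.trans[OF keys_add] Un_mono order.trans[OF keys_sum])
      (auto simp: keys_frag_of dest: subsetD[OF keys_cmul])
  then show "f \<in> carrier G"
    using Zs_subset Ts_subset by auto
  have lookup_f: "Poly_Mapping.lookup f z = (if z \<in> Zs then v (Inl z) else if z \<in> Ts then v (Inr z) else 0)" for z
    using Zs_Ts_disjoint finite_Zs finite_Ts
    by (auto simp: f_def lookup_add lookup_sum if_distrib[of "\<lambda>x. _ * x"] cong: if_cong)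
  have v_range: "v \<in> (\<Pi>\<^sub>E k\<in>I. case k of Inl _ \<Rightarrow> UNIV | Inr _ \<Rightarrow> {0..<2})"
    using v carrier_Z_Z2_sum[OF finite_Zs finite_Ts] by simp
  have "coords f k = v k" if "k \<in> I" for k
  proof -
    from that consider z where "k = Inl z" "z \<in> Zs" | t where "k = Inr t" "t \<in> Ts"
      by blast
    then show ?thesis
    proof cases
      case 1
      then show ?thesis
        by (simp add: coords_def frag_extend_normal_form_id[OF keys] lookup_f)
    next
      case 2
      then have "t \<notin> Zs" "v k \<in> {0..<2}"
        using Zs_Ts_disjoint PiE_mem[OF v_range \<open>k \<in> I\<close>] by auto
      then show ?thesis
        using 2 by (simp add: coords_def frag_extend_normal_form_id[OF keys] lookup_f)
    qed
  qed
  moreover have "coords f k = v k" if "k \<notin> I" for k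
    using that v_range by (simp add: coords_def PiE_iff extensional_def)
  ultimately show "coords f = v"
    by (intro ext) (metis)
qed

lemma coords_onto: "coords ` carrier G = carrier H"
proof
  show "coords ` carrier G \<subseteq> carrier H"
    using coords_hom by (auto simp: hom_def)
  show "carrier H \<subseteq> coords ` carrier G"
  proof
    fix v assume v: "v \<in> carrier H"
    show "v \<in> coords ` carrier G"
      by (rule image_eqI[where f = coords, OF sym[OF coords_basis_combination(2)[OF v]]
            coords_basis_combination(1)[OF v]])
  qed
qed

lemma frag_extend_normal_form_congruent:
  assumes "Poly_Mapping.keys f \<subseteq> S"
  shows "f - frag_extend \<nu> f \<in> D"
  using assms
proof (induction f rule: frag_induction)
  case zero
  then show ?case
    using subgroup.one_closed[OF subgroup_D] by simp
next
  case (one x)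
  then show ?case
    using normal_form_congruent by simp
next
  case (diff a b)
  then have "(a - frag_extend \<nu> a) - (b - frag_extend \<nu> b) \<in> D"
    using subgroup_free_Abelian_group_diff_closed[OF subgroup_D] by blast
  then show ?case
    by (simp add: frag_extend_diff algebra_simps)
qed

lemma even_on_Ts_in_relators:
  assumes keys: "Poly_Mapping.keys g \<subseteq> Ts" and even: "\<And>t. t \<in> Ts \<Longrightarrow> even (Poly_Mapping.lookup g t)"
  shows "g \<in> D"
proof -
  have "frag_cmul (Poly_Mapping.lookup g t) (frag_of t) \<in> D" if "t \<in> Poly_Mapping.keys g" for t
  proof -
    have "t \<in> Ts"
      using that keys by blast
    then obtain q where "Poly_Mapping.lookup g t = 2 * q"
      using even by (blast elim: evenE)
    then show ?thesis
      using subgroup_free_Abelian_group_cmul_closed[OF subgroup_D Ts_torsion, of t q] that keys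
      by (auto simp: mult.commute)
  qed
  then have "frag_extend frag_of g \<in> D"
    unfolding frag_extend_def by (rule subgroup_free_Abelian_group_sum_closed[OF subgroup_D])
  then show ?thesis
    by (simp flip: frag_expansion)
qed

lemma kernel_coords: "kernel G H coords = D"
proof
  have "R \<subseteq> kernel G H coords"
  proof
    fix r assume "r \<in> R"
    then have "r \<in> carrier G" "coords r = \<one>\<^bsub>H\<^esub>"
      using relators_subset relator_Zs relator_Ts by (blast, simp add: coords_eq_one_iff)
    then show "r \<in> kernel G H coords"
      by (simp add: kernel_def)
  qed
  moreover have "group_hom G H coords"
    using coords_hom group_Z_Z2_sum by (simp add: group_hom_def group_hom_axioms_def)
  ultimately show "D \<subseteq> kernel G H coords"
    by (intro group.generate_subgroup_incl[OF group_free_Abelian_group] group_hom.subgroup_kernel)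
next
  show "kernel G H coords \<subseteq> D"
  proof
    fix f assume f: "f \<in> kernel G H coords"
    then have keys_f: "Poly_Mapping.keys f \<subseteq> S"
      by (simp add: kernel_def)
    let ?g = "frag_extend \<nu> f"
    have "Poly_Mapping.keys ?g \<subseteq> Zs \<union> Ts"
      using keys_frag_extend[of \<nu> f] keys_normal_form keys_f by blast
    moreover have "\<forall>z\<in>Zs. Poly_Mapping.lookup ?g z = 0" "\<forall>t\<in>Ts. even (Poly_Mapping.lookup ?g t)"
      using f by (auto simp: kernel_def coords_eq_one_iff)
    ultimately have "?g \<in> D"
      by (intro even_on_Ts_in_relators) (auto simp: in_keys_iff)
    then show "f \<in> D"
      using subgroup.m_closed[OF subgroup_D frag_extend_normal_form_congruent[OF keys_f] \<open>?g \<in> D\<close>] by simp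
  qed
qed

theorem cyclic_decomp_quotient: "cyclic_decomp (G Mod D) (\<lambda>x. D #>\<^bsub>G\<^esub> frag_of x) Zs Ts"
proof -
  have "frag_of ` (Zs \<union> Ts) \<subseteq> carrier G"
    using Zs_subset Ts_subset by auto
  then show ?thesis
    using cyclic_decomp_FactGroup[OF group_free_Abelian_group coords_hom coords_onto _
        coords_frag_of_Zs coords_frag_of_Ts]
    by (simp add: kernel_coords)
qed

end

section \<open>The heap operation on \<int>/p\<close>

lemma Zp_mod_eq: "x \<in> Zp p \<Longrightarrow> x mod p = x"
  by (simp add: Zp_def)

lemma Zp_pos: "x \<in> Zp p \<Longrightarrow> 0 < p"
  by (simp add: Zp_def)

lemma Zp_eq_iff_dvd: "x \<in> Zp p \<Longrightarrow> y \<in> Zp p \<Longrightarrow> x = y \<longleftrightarrow> p dvd x - y"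
  by (metis Zp_mod_eq mod_eq_dvd_iff)

lemma br_in_Zp: "0 < p \<Longrightarrow> br p a b c \<in> Zp p"
  by (simp add: br_def Zp_def)

lemma br_eq_iff_dvd:
  assumes "y \<in> Zp p"
  shows "br p a b c = y \<longleftrightarrow> p dvd a - b + c - y"
proof -
  have "br p a b c = y \<longleftrightarrow> (a - b + c) mod p = y mod p"
    using Zp_mod_eq[OF assms] by (simp add: br_def)
  also have "\<dots> \<longleftrightarrow> p dvd a - b + c - y"
    by (rule mod_eq_dvd_iff)
  finally show ?thesis .
qed

lemma dvd_br_diff: "p dvd br p a b c - (a - b + c)"
  by (simp add: br_def flip: mod_eq_dvd_iff)

lemma br_same_left: "c \<in> Zp p \<Longrightarrow> br p a a c = c"
  by (simp add: br_def Zp_mod_eq)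

lemma br_eq_left_iff: "a \<in> Zp p \<Longrightarrow> b \<in> Zp p \<Longrightarrow> c \<in> Zp p \<Longrightarrow> br p a b c = a \<longleftrightarrow> b = c"
  using Zp_eq_iff_dvd[of c p b] br_eq_iff_dvd[of a p a b c] by auto

lemma br_eq_right_iff: "a \<in> Zp p \<Longrightarrow> b \<in> Zp p \<Longrightarrow> c \<in> Zp p \<Longrightarrow> br p a b c = c \<longleftrightarrow> a = b"
  using Zp_eq_iff_dvd[of a p b] br_eq_iff_dvd[of c p a b c] by auto

lemma br_eq_middle_iff:
  assumes "odd p" "a \<in> Zp p" "b \<in> Zp p"
  shows "br p a b a = b \<longleftrightarrow> a = b"
proof -
  have "coprime p 2"
    using \<open>odd p\<close> by (simp add: coprime_commute)
  then have "p dvd 2 * (a - b) \<longleftrightarrow> p dvd a - b"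
    by (rule coprime_dvd_mult_right_iff)
  then show ?thesis
    using Zp_eq_iff_dvd[OF assms(2,3)] br_eq_iff_dvd[OF assms(3), of a b a] by (simp add: algebra_simps)
qed

lemma br_br_left: "c \<in> Zp p \<Longrightarrow> br p b a (br p a b c) = c"
  using br_eq_iff_dvd[of c p b a "br p a b c"] dvd_br_diff[of p a b c] by (simp add: algebra_simps)

lemma br_br_middle:
  assumes "b \<in> Zp p"
  shows "br p c (br p a b c) a = b"
proof -
  have "c - br p a b c + a - b = - (br p a b c - (a - b + c))"
    by simp
  then show ?thesis
    by (simp only: br_eq_iff_dvd[OF assms] dvd_minus_iff dvd_br_diff)
qed

lemma br_br_right: "a \<in> Zp p \<Longrightarrow> br p (br p a b c) c b = a"
  using br_eq_iff_dvd[of a p "br p a b c" c b] dvd_br_diff[of p a b c] by (simp add: algebra_simps)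

section \<open>Generators and relations of the complexes\<close>

lemma finite_LB: "finite (LB p n)"
proof (rule finite_subset)
  show "LB p n \<subseteq> {xs. set xs \<subseteq> Zp p \<times> Zp p \<and> length xs = n}"
    unfolding LB_def by (auto simp: mem_Times_iff)
  show "finite {xs. set xs \<subseteq> Zp p \<times> Zp p \<and> length xs = n}"
    by (rule finite_lists_length_eq) (simp add: Zp_def)
qed

lemma act_in_LB:
  assumes "xs \<in> LB p n" "i < n"
  shows "act p i xs \<in> LB p n"
proof -
  obtain a where a: "a \<in> Zp p" and xs: "length xs = n" "\<And>x. x \<in> set xs \<Longrightarrow> fst x = a \<and> snd x \<in> Zp p"
    using assms(1) by (auto simp: LB_def)
  have "0 < p"
    using a by (rule Zp_pos)
  have "xs ! i \<in> set xs"
    using assms(2) xs(1) by simp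
  then have "snd (xs ! i) \<in> Zp p" "fst (xs ! i) = a"
    using xs(2) by auto
  moreover have "length (act p i xs) = n"
    using assms(2) xs(1) by (simp add: act_def)
  ultimately show ?thesis
    using xs(2) a br_in_Zp[OF \<open>0 < p\<close>] unfolding LB_def act_def
    by (auto simp: ustar_def ostar_def rho_def dest: in_set_takeD in_set_dropD)
qed

lemma relators_subset_carrier:
  "D_lb_gens p n \<union> D_rho_gens p n \<subseteq> carrier (free_Abelian_group (LB p n))"
  using act_in_LB by (auto simp: D_lb_gens_def D_rho_gens_def keys_frag_of dest!: subsetD[OF keys_add])

lemma D_SLB_eq: "D_SLB p n = generate (free_Abelian_group (LB p n)) (D_lb_gens p n \<union> D_rho_gens p n)"
  by (simp add: D_SLB_def C_lb_def)

lemma subgroup_D_SLB: "subgroup (D_SLB p n) (free_Abelian_group (LB p n))"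
  unfolding D_SLB_eq by (rule group.generate_is_subgroup[OF group_free_Abelian_group relators_subset_carrier])

lemma degenerate_in_D_SLB:
  "xs \<in> LB p n \<Longrightarrow> i + 1 < n \<Longrightarrow> snd (xs ! i) = snd (xs ! (i + 1)) \<Longrightarrow> frag_of xs \<in> D_SLB p n"
  unfolding D_SLB_eq by (rule generate.incl) (auto simp: D_lb_gens_def)

lemma rho_pair_in_D_SLB: "xs \<in> LB p n \<Longrightarrow> i < n \<Longrightarrow> frag_of xs + frag_of (act p i xs) \<in> D_SLB p n"
  unfolding D_SLB_eq by (rule generate.incl) (auto simp: D_rho_gens_def)

lemma cyclic_decomp_C_SLB:
  assumes "normal_form_presentation (LB p n) (D_lb_gens p n \<union> D_rho_gens p n) Zs Ts \<nu>"
  shows "cyclic_decomp (C_SLB p n) (cls p n) Zs Ts"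
proof -
  have "cls p n = (\<lambda>x. D_SLB p n #>\<^bsub>free_Abelian_group (LB p n)\<^esub> frag_of x)"
    by (simp add: cls_def C_lb_def fun_eq_iff)
  then show ?thesis
    using normal_form_presentation.cyclic_decomp_quotient[OF assms]
    by (simp add: C_SLB_def D_SLB_eq C_lb_def)
qed

section \<open>Degree 1\<close>

definition normal_form_1 :: "(int \<times> int) list \<Rightarrow> (int \<times> int) list \<Rightarrow>\<^sub>0 int" where
  "normal_form_1 xs = (if fst (hd xs) \<le> snd (hd xs) then frag_of xs else - frag_of (map rho xs))"

lemma LB_1_eq: "LB p 1 = {[(a, b)] | a b. a \<in> Zp p \<and> b \<in> Zp p}"
  by (fastforce simp: LB_def length_Suc_conv)

lemma relator_1_cases:
  assumes "r \<in> D_lb_gens p 1 \<union> D_rho_gens p 1"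
  obtains a b where "a \<in> Zp p" "b \<in> Zp p" "r = frag_of [(a, b)] + frag_of [(b, a)]"
proof -
  have "D_lb_gens p 1 = {}"
    by (simp add: D_lb_gens_def)
  then obtain xs i where "xs \<in> LB p 1" "i < 1" "r = frag_of xs + frag_of (act p i xs)"
    using assms unfolding D_rho_gens_def by blast
  moreover obtain a b where "xs = [(a, b)]" "a \<in> Zp p" "b \<in> Zp p"
    using \<open>xs \<in> LB p 1\<close> unfolding LB_1_eq by blast
  ultimately show thesis
    using that by (simp add: act_def rho_def)
qed

lemma frag_extend_normal_form_1_relator:
  assumes "r \<in> D_lb_gens p 1 \<union> D_rho_gens p 1"
  shows "frag_extend normal_form_1 r = 0 \<or> (\<exists>a. frag_extend normal_form_1 r = frag_cmul 2 (frag_of [(a, a)]))"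
proof -
  obtain a b where r: "r = frag_of [(a, b)] + frag_of [(b, a)]"
    using assms by (rule relator_1_cases)
  consider "a < b" | "a = b" | "b < a"
    by linarith
  then show ?thesis
    by cases (auto simp: r normal_form_1_def rho_def frag_extend_add frag_cmul_2)
qed

lemma rho_pair_1_in_D_SLB:
  assumes "a \<in> Zp p" "b \<in> Zp p"
  shows "frag_of [(a, b)] + frag_of [(b, a)] \<in> D_SLB p 1"
proof -
  have "[(a, b)] \<in> LB p 1"
    unfolding LB_1_eq using assms by blast
  then show ?thesis
    using rho_pair_in_D_SLB[of "[(a, b)]" p 1 0] by (simp add: act_def rho_def)
qed

lemma gen_minus_normal_form_1_in_D_SLB:
  assumes "xs \<in> LB p 1"
  shows "frag_of xs - normal_form_1 xs \<in> D_SLB p 1"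
proof -
  obtain a b where xs: "xs = [(a, b)]" "a \<in> Zp p" "b \<in> Zp p"
    using assms unfolding LB_1_eq by blast
  show ?thesis
  proof (cases "a \<le> b")
    case True
    then show ?thesis
      using xs subgroup.one_closed[OF subgroup_D_SLB, of p 1] by (simp add: normal_form_1_def)
  next
    case False
    then show ?thesis
      using xs rho_pair_1_in_D_SLB by (simp add: normal_form_1_def rho_def)
  qed
qed

lemma normal_form_presentation_1:
  "normal_form_presentation (LB p 1) (D_lb_gens p 1 \<union> D_rho_gens p 1)
    {[(a, b)] | a b. a \<in> Zp p \<and> b \<in> Zp p \<and> a < b} {[(a, a)] | a. a \<in> Zp p} normal_form_1"
proof (unfold_locales, fold D_SLB_eq)
  let ?Zs = "{[(a, b)] | a b. a \<in> Zp p \<and> b \<in> Zp p \<and> a < b}"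
  let ?Ts = "{[(a, a)] | a. a \<in> Zp p}"
  show Zs: "?Zs \<subseteq> LB p 1" and Ts: "?Ts \<subseteq> LB p 1"
    unfolding LB_1_eq by blast+
  show "finite ?Zs"
    by (rule finite_subset[OF Zs finite_LB])
  show "finite ?Ts"
    by (rule finite_subset[OF Ts finite_LB])
  show "?Zs \<inter> ?Ts = {}"
    by auto
  show "D_lb_gens p 1 \<union> D_rho_gens p 1 \<subseteq> carrier (free_Abelian_group (LB p 1))"
    by (rule relators_subset_carrier)
  show "Poly_Mapping.keys (normal_form_1 xs) \<subseteq> ?Zs \<union> ?Ts" if "xs \<in> LB p 1" for xs
  proof -
    obtain a b where "xs = [(a, b)]" "a \<in> Zp p" "b \<in> Zp p"
      using \<open>xs \<in> LB p 1\<close> unfolding LB_1_eq by blast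
    then show ?thesis
      by (cases a b rule: linorder_cases) (auto simp: normal_form_1_def rho_def keys_frag_of)
  qed
  show "normal_form_1 z = frag_of z" if "z \<in> ?Zs \<union> ?Ts" for z
    using that by (auto simp: normal_form_1_def)
  show "frag_of xs - normal_form_1 xs \<in> D_SLB p 1" if "xs \<in> LB p 1" for xs
    using that by (rule gen_minus_normal_form_1_in_D_SLB)
  show "Poly_Mapping.lookup (frag_extend normal_form_1 r) z = 0"
    if "r \<in> D_lb_gens p 1 \<union> D_rho_gens p 1" "z \<in> ?Zs" for r z
    using frag_extend_normal_form_1_relator[OF that(1)] that(2) by auto
  show "even (Poly_Mapping.lookup (frag_extend normal_form_1 r) z)"
    if "r \<in> D_lb_gens p 1 \<union> D_rho_gens p 1" for r z
    using frag_extend_normal_form_1_relator[OF that] by auto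
  show "frag_cmul 2 (frag_of z) \<in> D_SLB p 1" if "z \<in> ?Ts" for z
    using that rho_pair_1_in_D_SLB by (auto simp: frag_cmul_2)
qed

section \<open>Degree 2\<close>

text \<open>
  The quadruple (a, b, c, [a,b,c]) encodes the generator ((a,b),(a,c)); the two \<rho>-relations
  act on it as sigma1 and sigma2, and its orbit is the set Q(a,b,c).
\<close>

type_synonym quad = "int \<times> int \<times> int \<times> int"

fun is_quad :: "int \<Rightarrow> quad \<Rightarrow> bool" where
  "is_quad p (a, b, c, d) \<longleftrightarrow> a \<in> Zp p \<and> b \<in> Zp p \<and> c \<in> Zp p \<and> d = br p a b c"

fun sigma1 :: "quad \<Rightarrow> quad" where
  "sigma1 (a, b, c, d) = (b, a, d, c)"

fun sigma2 :: "quad \<Rightarrow> quad" where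
  "sigma2 (a, b, c, d) = (c, d, a, b)"

fun sigma12 :: "quad \<Rightarrow> quad" where
  "sigma12 (a, b, c, d) = (d, c, b, a)"

definition orbit :: "quad \<Rightarrow> quad set" where
  "orbit t = {t, sigma1 t, sigma2 t, sigma12 t}"

fun degenerate :: "quad \<Rightarrow> bool" where
  "degenerate (a, b, c, d) \<longleftrightarrow> b = c"

lemma sigma_compose [simp]:
  "sigma1 (sigma1 t) = t" "sigma2 (sigma2 t) = t" "sigma12 (sigma12 t) = t"
  "sigma1 (sigma2 t) = sigma12 t" "sigma2 (sigma1 t) = sigma12 t"
  "sigma1 (sigma12 t) = sigma2 t" "sigma12 (sigma1 t) = sigma2 t"
  "sigma2 (sigma12 t) = sigma1 t" "sigma12 (sigma2 t) = sigma1 t"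
  by (cases t; simp)+

lemma orbit_sigma [simp]:
  "orbit (sigma1 t) = orbit t" "orbit (sigma2 t) = orbit t" "orbit (sigma12 t) = orbit t"
  by (auto simp: orbit_def)

lemma sigma_in_orbit: "sigma1 t \<in> orbit t" "sigma2 t \<in> orbit t" "sigma12 t \<in> orbit t"
  by (simp_all add: orbit_def)

lemma self_in_orbit [simp]: "t \<in> orbit t"
  by (simp add: orbit_def)

lemma finite_orbit [simp]: "finite (orbit t)"
  by (simp add: orbit_def)

lemma orbit_eq: "s \<in> orbit t \<Longrightarrow> orbit s = orbit t"
  by (auto simp: orbit_def)

lemma Min_orbit_in_orbit: "Min (orbit t) \<in> orbit t"
  by (rule Min_in) (auto simp: orbit_def)

lemma Min_orbit_idem [simp]: "Min (orbit (Min (orbit t))) = Min (orbit t)"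
  using orbit_eq[OF Min_orbit_in_orbit] by simp

lemma sigma1_fixed_orbit:
  assumes "s \<in> orbit t"
  shows "sigma1 s = s \<longleftrightarrow> sigma1 t = t"
proof -
  obtain a b c d where t: "t = (a, b, c, d)"
    by (cases t)
  from assms consider "s = t" | "s = sigma1 t" | "s = sigma2 t" | "s = sigma12 t"
    by (auto simp: orbit_def)
  then show ?thesis
    by cases (auto simp: t)
qed

lemma is_quadE:
  assumes "is_quad p t"
  obtains a b c where "t = (a, b, c, br p a b c)" "a \<in> Zp p" "b \<in> Zp p" "c \<in> Zp p"
  using assms by (cases t) auto

lemma is_quad_orbit:
  assumes "is_quad p t" "s \<in> orbit t"
  shows "is_quad p s"
proof -
  obtain a b c where t: "t = (a, b, c, br p a b c)" "a \<in> Zp p" "b \<in> Zp p" "c \<in> Zp p"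
    using assms(1) by (rule is_quadE)
  then have "br p a b c \<in> Zp p"
    using br_in_Zp Zp_pos by blast
  then show ?thesis
    using assms(2) t by (auto simp: orbit_def br_br_left br_br_middle br_br_right)
qed

lemma degenerate_orbit:
  assumes "is_quad p t" "s \<in> orbit t"
  shows "degenerate s \<longleftrightarrow> degenerate t"
proof -
  obtain a b c where t: "t = (a, b, c, br p a b c)" "a \<in> Zp p" "b \<in> Zp p" "c \<in> Zp p"
    using assms(1) by (rule is_quadE)
  then have "br p a b c = a \<longleftrightarrow> b = c"
    by (intro br_eq_left_iff)
  then show ?thesis
    using assms(2) by (auto simp: t orbit_def)
qed

lemma sigma1_fixed_iff:
  assumes "is_quad p (a, b, c, d)"
  shows "sigma1 (a, b, c, d) = (a, b, c, d) \<longleftrightarrow> a = b"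
  using assms br_eq_right_iff[of a p b c] by auto

text \<open>This is where p must be odd: for p = 2, sigma2 fixes (a, b, a, b).\<close>

lemma orbit_halves_disjoint:
  assumes "odd p" "is_quad p t" "sigma1 t \<noteq> t" "\<not> degenerate t"
  shows "{t, sigma12 t} \<inter> {sigma1 t, sigma2 t} = {}"
proof -
  obtain a b c d where t: "t = (a, b, c, d)"
    by (cases t)
  have "a \<noteq> b" "b \<noteq> c" "d = br p a b c" "a \<in> Zp p" "b \<in> Zp p" "c \<in> Zp p"
    using assms(2-4) sigma1_fixed_iff[of p a b c d] by (auto simp: t)
  moreover have "c \<noteq> d"
    using calculation br_eq_right_iff[of a p b c] by auto
  moreover have "\<not> (a = c \<and> b = d)"
    using calculation br_eq_middle_iff[OF \<open>odd p\<close>, of a b] by auto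
  ultimately show ?thesis
    by (auto simp: t)
qed

text \<open>
  In the quotient the \<rho>-relations read [t] = -[sigma1 t] = -[sigma2 t], so the class of the
  generator t is orient t times the class of the orbit minimum.
\<close>

definition orient :: "quad \<Rightarrow> int" where
  "orient t = (if degenerate t then 0 else if Min (orbit t) \<in> {t, sigma12 t} then 1 else -1)"

lemma orient_sigma_flip:
  assumes "odd p" "is_quad p t" "sigma1 t \<noteq> t"
  shows "orient (sigma1 t) = - orient t" "orient (sigma2 t) = - orient t"
proof -
  have degenerate_sigma: "degenerate (sigma1 t) \<longleftrightarrow> degenerate t" "degenerate (sigma2 t) \<longleftrightarrow> degenerate t"
    using degenerate_orbit[OF assms(2) sigma_in_orbit(1)] degenerate_orbit[OF assms(2) sigma_in_orbit(2)]
    by blast+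
  have "orient (sigma1 t) = - orient t \<and> orient (sigma2 t) = - orient t"
  proof (cases "degenerate t")
    case True
    then show ?thesis
      by (simp add: orient_def degenerate_sigma)
  next
    case False
    then have "{t, sigma12 t} \<inter> {sigma1 t, sigma2 t} = {}"
      using orbit_halves_disjoint assms by blast
    moreover have "Min (orbit t) \<in> {t, sigma12 t} \<union> {sigma1 t, sigma2 t}"
      using Min_orbit_in_orbit[of t] by (auto simp: orbit_def)
    ultimately have "Min (orbit t) \<in> {sigma1 t, sigma2 t} \<longleftrightarrow> Min (orbit t) \<notin> {t, sigma12 t}"
      by blast
    then show ?thesis
      using False by (auto simp: orient_def degenerate_sigma)
  qed
  then show "orient (sigma1 t) = - orient t" "orient (sigma2 t) = - orient t"
    by simp_all
qed

lemma orient_sigma2_of_sigma1_fixed: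
  assumes "is_quad p t" "sigma1 t = t"
  shows "orient (sigma2 t) = orient t"
proof -
  have "sigma12 t = sigma2 t"
    using assms(2) sigma_compose(5)[of t] by simp
  moreover have "degenerate (sigma2 t) \<longleftrightarrow> degenerate t"
    by (rule degenerate_orbit[OF assms(1) sigma_in_orbit(2)])
  ultimately show ?thesis
    using assms(2) by (auto simp: orient_def)
qed

definition orbit_minima :: "int \<Rightarrow> quad set" where
  "orbit_minima p = {t. is_quad p t \<and> \<not> degenerate t \<and> Min (orbit t) = t}"

lemma orient_orbit_minimum: "t \<in> orbit_minima p \<Longrightarrow> orient t = 1"
  by (simp add: orbit_minima_def orient_def)

lemma Min_orbit_in_orbit_minima:
  assumes "is_quad p t" "\<not> degenerate t"
  shows "Min (orbit t) \<in> orbit_minima p"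
  using assms is_quad_orbit[OF _ Min_orbit_in_orbit] degenerate_orbit[OF _ Min_orbit_in_orbit]
  by (simp add: orbit_minima_def)

fun gen_of_quad :: "quad \<Rightarrow> (int \<times> int) list" where
  "gen_of_quad (a, b, c, d) = [(a, b), (a, c)]"

definition quad_of_gen :: "int \<Rightarrow> (int \<times> int) list \<Rightarrow> quad" where
  "quad_of_gen p xs =
    (fst (xs ! 0), snd (xs ! 0), snd (xs ! 1), br p (fst (xs ! 0)) (snd (xs ! 0)) (snd (xs ! 1)))"

lemma quad_of_gen_of_quad: "is_quad p t \<Longrightarrow> quad_of_gen p (gen_of_quad t) = t"
  by (cases t) (simp add: quad_of_gen_def)

lemma inj_on_gen_of_quad: "inj_on gen_of_quad {t. is_quad p t}"
  by (rule inj_on_inverseI[where g = "quad_of_gen p"]) (simp add: quad_of_gen_of_quad)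

lemma LB_2_eq: "LB p 2 = gen_of_quad ` {t. is_quad p t}"
proof
  show "LB p 2 \<subseteq> gen_of_quad ` {t. is_quad p t}"
  proof
    fix xs assume "xs \<in> LB p 2"
    then obtain a x y where xs: "xs = [x, y]" "a \<in> Zp p" "fst x = a" "fst y = a"
        "snd x \<in> Zp p" "snd y \<in> Zp p"
      by (auto simp: LB_def numeral_2_eq_2 length_Suc_conv)
    then have "xs = gen_of_quad (a, snd x, snd y, br p a (snd x) (snd y))"
      by (cases x, cases y) simp
    moreover have "is_quad p (a, snd x, snd y, br p a (snd x) (snd y))"
      using xs by simp
    ultimately show "xs \<in> gen_of_quad ` {t. is_quad p t}"
      by blast
  qed
next
  show "gen_of_quad ` {t. is_quad p t} \<subseteq> LB p 2"
    by (auto elim!: is_quadE simp: LB_def)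
qed

lemma gen_of_quad_in_LB: "is_quad p t \<Longrightarrow> gen_of_quad t \<in> LB p 2"
  by (auto simp: LB_2_eq)

lemma act_gen_of_quad:
  assumes "is_quad p t"
  shows "act p 0 (gen_of_quad t) = gen_of_quad (sigma1 t)" "act p 1 (gen_of_quad t) = gen_of_quad (sigma2 t)"
  using assms by (auto elim!: is_quadE simp: act_def ustar_def ostar_def rho_def)

lemma relator_2_cases:
  assumes "r \<in> D_lb_gens p 2 \<union> D_rho_gens p 2"
  obtains (degenerate) t where "is_quad p t" "degenerate t" "r = frag_of (gen_of_quad t)"
    | (rho) t s where "is_quad p t" "s \<in> {sigma1 t, sigma2 t}"
        "r = frag_of (gen_of_quad t) + frag_of (gen_of_quad s)"
proof -
  from assms consider
      (lb) xs i where "xs \<in> LB p 2" "i + 1 < 2" "snd (xs ! i) = snd (xs ! (i + 1))" "r = frag_of xs"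
    | (rh) xs i where "xs \<in> LB p 2" "i < 2" "r = frag_of xs + frag_of (act p i xs)"
    by (auto simp: D_lb_gens_def D_rho_gens_def)
  then show thesis
  proof cases
    case lb
    then obtain t where t: "is_quad p t" "xs = gen_of_quad t"
      by (auto simp: LB_2_eq)
    moreover have "degenerate t"
      using lb t(2) by (cases t) auto
    ultimately show thesis
      using lb degenerate by blast
  next
    case rh
    then obtain t where t: "is_quad p t" "xs = gen_of_quad t"
      by (auto simp: LB_2_eq)
    have "i = 0 \<or> i = 1"
      using rh by auto
    then show thesis
    proof
      assume "i = 0"
      then show thesis
        using rho[OF t(1), of "sigma1 t"] act_gen_of_quad(1)[OF t(1)] rh(3) t(2) by simp
    next
      assume "i = 1"
      then show thesis
        using rho[OF t(1), of "sigma2 t"] act_gen_of_quad(2)[OF t(1)] rh(3) t(2) by simp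
    qed
  qed
qed

definition normal_form_2 :: "int \<Rightarrow> (int \<times> int) list \<Rightarrow> (int \<times> int) list \<Rightarrow>\<^sub>0 int" where
  "normal_form_2 p xs = frag_cmul (orient (quad_of_gen p xs)) (frag_of (gen_of_quad (Min (orbit (quad_of_gen p xs)))))"

lemma normal_form_2_gen_of_quad:
  "is_quad p t \<Longrightarrow> normal_form_2 p (gen_of_quad t) = frag_cmul (orient t) (frag_of (gen_of_quad (Min (orbit t))))"
  by (simp add: normal_form_2_def quad_of_gen_of_quad)

lemma normal_form_2_orbit_minimum:
  assumes "t \<in> orbit_minima p"
  shows "normal_form_2 p (gen_of_quad t) = frag_of (gen_of_quad t)"
proof -
  have "is_quad p t" "Min (orbit t) = t"
    using assms by (simp_all add: orbit_minima_def)
  then show ?thesis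
    using orient_orbit_minimum[OF assms] by (simp add: normal_form_2_gen_of_quad)
qed

lemma keys_normal_form_2:
  assumes "is_quad p t"
  shows "Poly_Mapping.keys (normal_form_2 p (gen_of_quad t)) \<subseteq> gen_of_quad ` orbit_minima p"
proof (cases "degenerate t")
  case True
  then show ?thesis
    using assms by (simp add: normal_form_2_gen_of_quad orient_def)
next
  case False
  then show ?thesis
    using assms Min_orbit_in_orbit_minima[OF assms False]
    by (auto simp: normal_form_2_gen_of_quad keys_frag_of dest!: subsetD[OF keys_cmul])
qed

lemma sigma_pairs_in_D_SLB:
  assumes "is_quad p t"
  shows "frag_of (gen_of_quad t) + frag_of (gen_of_quad (sigma1 t)) \<in> D_SLB p 2"
    "frag_of (gen_of_quad t) + frag_of (gen_of_quad (sigma2 t)) \<in> D_SLB p 2"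
  unfolding act_gen_of_quad[OF assms, symmetric]
  by (intro rho_pair_in_D_SLB gen_of_quad_in_LB[OF assms]; simp)+

lemma sigma12_diff_in_D_SLB:
  assumes "is_quad p t"
  shows "frag_of (gen_of_quad t) - frag_of (gen_of_quad (sigma12 t)) \<in> D_SLB p 2"
proof -
  have "is_quad p (sigma1 t)"
    using is_quad_orbit[OF assms sigma_in_orbit(1)] .
  then have "(frag_of (gen_of_quad t) + frag_of (gen_of_quad (sigma1 t)))
      - (frag_of (gen_of_quad (sigma1 t)) + frag_of (gen_of_quad (sigma2 (sigma1 t)))) \<in> D_SLB p 2"
    using sigma_pairs_in_D_SLB assms subgroup_free_Abelian_group_diff_closed[OF subgroup_D_SLB] by blast
  then show ?thesis
    by simp
qed

lemma gen_minus_normal_form_2_in_D_SLB: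
  assumes "is_quad p t"
  shows "frag_of (gen_of_quad t) - normal_form_2 p (gen_of_quad t) \<in> D_SLB p 2"
proof (cases "degenerate t")
  case True
  then have "frag_of (gen_of_quad t) \<in> D_SLB p 2"
    using degenerate_in_D_SLB[OF gen_of_quad_in_LB[OF assms], of 0] by (cases t) simp
  then show ?thesis
    using True assms by (simp add: normal_form_2_gen_of_quad orient_def)
next
  case False
  have "Min (orbit t) \<in> {t, sigma1 t, sigma2 t, sigma12 t}"
    using Min_orbit_in_orbit by (simp only: orbit_def)
  then consider "Min (orbit t) = t"
    | "Min (orbit t) = sigma12 t" "Min (orbit t) \<noteq> t"
    | "Min (orbit t) = sigma1 t" "Min (orbit t) \<notin> {t, sigma12 t}"
    | "Min (orbit t) = sigma2 t" "Min (orbit t) \<notin> {t, sigma12 t}"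
    by blast
  then show ?thesis
  proof cases
    case 1
    then show ?thesis
      using False assms subgroup.one_closed[OF subgroup_D_SLB]
      by (simp add: normal_form_2_gen_of_quad orient_def)
  qed (use False assms sigma12_diff_in_D_SLB sigma_pairs_in_D_SLB
      in \<open>simp_all add: normal_form_2_gen_of_quad orient_def\<close>)
qed

lemma frag_extend_normal_form_2_relator:
  assumes "odd p" "r \<in> D_lb_gens p 2 \<union> D_rho_gens p 2"
  shows "frag_extend (normal_form_2 p) r = 0 \<or>
    (\<exists>m k. is_quad p m \<and> sigma1 m = m \<and> frag_extend (normal_form_2 p) r = frag_cmul (2 * k) (frag_of (gen_of_quad m)))"
  using assms(2)
proof (cases rule: relator_2_cases)
  case (degenerate t)
  then show ?thesis
    by (simp add: normal_form_2_gen_of_quad orient_def)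
next
  case (rho t s)
  let ?m = "Min (orbit t)"
  have s: "s \<in> orbit t"
    using rho(2) sigma_in_orbit by blast
  have sum: "frag_extend (normal_form_2 p) r = frag_cmul (orient t + orient s) (frag_of (gen_of_quad ?m))"
    using rho(1,3) normal_form_2_gen_of_quad[OF is_quad_orbit[OF rho(1) s]] orbit_eq[OF s]
    by (simp add: normal_form_2_gen_of_quad frag_extend_add frag_cmul_distrib)
  show ?thesis
  proof (cases "sigma1 t = t")
    case True
    then have "orient s = orient t"
      using orient_sigma2_of_sigma1_fixed[OF rho(1)] rho(2) by auto
    then have "frag_extend (normal_form_2 p) r = frag_cmul (2 * orient t) (frag_of (gen_of_quad ?m))"
      using sum by simp
    moreover have "is_quad p ?m"
      by (rule is_quad_orbit[OF rho(1) Min_orbit_in_orbit])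
    moreover have "sigma1 ?m = ?m"
      using sigma1_fixed_orbit[OF Min_orbit_in_orbit[of t]] True by simp
    ultimately show ?thesis
      by blast
  next
    case False
    then have "orient s = - orient t"
      using orient_sigma_flip[OF assms(1) rho(1) False] rho(2) by auto
    then show ?thesis
      using sum by simp
  qed
qed

lemma lookup_frag_extend_normal_form_2_relator:
  assumes "odd p" "r \<in> D_lb_gens p 2 \<union> D_rho_gens p 2" "t \<in> orbit_minima p" "sigma1 t \<noteq> t"
  shows "Poly_Mapping.lookup (frag_extend (normal_form_2 p) r) (gen_of_quad t) = 0"
proof -
  from frag_extend_normal_form_2_relator[OF assms(1,2)] consider
      "frag_extend (normal_form_2 p) r = 0"
    | m k where "is_quad p m" "sigma1 m = m"
        "frag_extend (normal_form_2 p) r = frag_cmul (2 * k) (frag_of (gen_of_quad m))"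
    by blast
  then show ?thesis
  proof cases
    case 2
    have "gen_of_quad m \<noteq> gen_of_quad t"
      using inj_onD[OF inj_on_gen_of_quad[of p], of m t] 2 assms(3,4) by (auto simp: orbit_minima_def)
    then show ?thesis
      using 2 by simp
  qed simp
qed

lemma torsion_2_in_D_SLB:
  assumes "t \<in> orbit_minima p" "sigma1 t = t"
  shows "frag_cmul 2 (frag_of (gen_of_quad t)) \<in> D_SLB p 2"
  using sigma_pairs_in_D_SLB(1)[of p t] assms by (simp add: frag_cmul_2 orbit_minima_def)

lemma normal_form_presentation_2:
  assumes "odd p"
  shows "normal_form_presentation (LB p 2) (D_lb_gens p 2 \<union> D_rho_gens p 2)
    (gen_of_quad ` {t \<in> orbit_minima p. sigma1 t \<noteq> t}) (gen_of_quad ` {t \<in> orbit_minima p. sigma1 t = t})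
    (normal_form_2 p)"
proof (unfold_locales, fold D_SLB_eq)
  let ?Zs = "gen_of_quad ` {t \<in> orbit_minima p. sigma1 t \<noteq> t}"
  let ?Ts = "gen_of_quad ` {t \<in> orbit_minima p. sigma1 t = t}"
  have minima_split: "gen_of_quad ` orbit_minima p = ?Zs \<union> ?Ts"
    by blast
  have "gen_of_quad ` orbit_minima p \<subseteq> LB p 2"
    by (auto simp: LB_2_eq orbit_minima_def)
  then show Zs: "?Zs \<subseteq> LB p 2" and Ts: "?Ts \<subseteq> LB p 2"
    by auto
  show "finite ?Zs"
    by (rule finite_subset[OF Zs finite_LB])
  show "finite ?Ts"
    by (rule finite_subset[OF Ts finite_LB])
  have "s = t" if "gen_of_quad s = gen_of_quad t" "s \<in> orbit_minima p" "t \<in> orbit_minima p" for s t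
    using inj_onD[OF inj_on_gen_of_quad[of p] that(1)] that(2,3) by (auto simp: orbit_minima_def)
  then show "?Zs \<inter> ?Ts = {}"
    by blast
  show "D_lb_gens p 2 \<union> D_rho_gens p 2 \<subseteq> carrier (free_Abelian_group (LB p 2))"
    by (rule relators_subset_carrier)
  show "Poly_Mapping.keys (normal_form_2 p xs) \<subseteq> ?Zs \<union> ?Ts" if "xs \<in> LB p 2" for xs
    using that keys_normal_form_2 unfolding LB_2_eq minima_split[symmetric] by blast
  show "normal_form_2 p z = frag_of z" if "z \<in> ?Zs \<union> ?Ts" for z
    using that normal_form_2_orbit_minimum by blast
  show "frag_of xs - normal_form_2 p xs \<in> D_SLB p 2" if "xs \<in> LB p 2" for xs
    using that gen_minus_normal_form_2_in_D_SLB unfolding LB_2_eq by blast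
  show "Poly_Mapping.lookup (frag_extend (normal_form_2 p) r) z = 0"
    if "r \<in> D_lb_gens p 2 \<union> D_rho_gens p 2" "z \<in> ?Zs" for r z
    using that lookup_frag_extend_normal_form_2_relator[OF assms] by blast
  show "even (Poly_Mapping.lookup (frag_extend (normal_form_2 p) r) z)"
    if "r \<in> D_lb_gens p 2 \<union> D_rho_gens p 2" for r z
    using frag_extend_normal_form_2_relator[OF assms that] by (elim disjE exE conjE) simp_all
  show "frag_cmul 2 (frag_of z) \<in> D_SLB p 2" if "z \<in> ?Ts" for z
    using that torsion_2_in_D_SLB by blast
qed

lemma lex4_le_iff_le: "lex4_le x y \<longleftrightarrow> x \<le> y"
  by (cases x; cases y) (auto simp: lex4_le_def lex4_less_def less_eq_prod_def less_prod_def)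

lemma is_lexmin_iff_Min: "finite Q \<Longrightarrow> x \<in> Q \<Longrightarrow> is_lexmin x Q \<longleftrightarrow> Min Q = x"
  by (auto simp: is_lexmin_def lex4_le_iff_le intro: Min_eqI)

lemma Qset_eq_orbit: "Qset p a b c = orbit (a, b, c, br p a b c)"
  by (simp add: Qset_def orbit_def Let_def)

lemma lexmin_gens_eq:
  "{[(a, b), (a, c)] | a b c. a \<in> Zp p \<and> b \<in> Zp p \<and> c \<in> Zp p \<and> a \<noteq> b \<and> b \<noteq> c
       \<and> is_lexmin (a, b, c, br p a b c) (Qset p a b c)}
    = gen_of_quad ` {t \<in> orbit_minima p. sigma1 t \<noteq> t}"
    (is "{_ | a b c. ?P a b c} = _")
proof -
  have minimum_iff: "t \<in> orbit_minima p \<and> sigma1 t \<noteq> t \<longleftrightarrow> (\<exists>a b c. t = (a, b, c, br p a b c) \<and> ?P a b c)"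
    for t
    by (cases t) (auto simp: orbit_minima_def Qset_eq_orbit is_lexmin_iff_Min br_same_left)
  show ?thesis
  proof (intro equalityI subsetI)
    fix xs assume "xs \<in> {[(a, b), (a, c)] | a b c. ?P a b c}"
    then obtain a b c where "xs = gen_of_quad (a, b, c, br p a b c)" "?P a b c"
      by auto
    then show "xs \<in> gen_of_quad ` {t \<in> orbit_minima p. sigma1 t \<noteq> t}"
      using minimum_iff[of "(a, b, c, br p a b c)"] by blast
  next
    fix xs assume "xs \<in> gen_of_quad ` {t \<in> orbit_minima p. sigma1 t \<noteq> t}"
    then obtain t where "t \<in> orbit_minima p" "sigma1 t \<noteq> t" "xs = gen_of_quad t"
      by blast
    then show "xs \<in> {[(a, b), (a, c)] | a b c. ?P a b c}"
      using minimum_iff[of t] by force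
  qed
qed

lemma Min_orbit_sigma1_fixed: "Min (orbit (a, a, b, b)) = (a, a, b, b) \<longleftrightarrow> a \<le> b"
  by (auto simp: orbit_def min_def less_eq_prod_def less_prod_def)

lemma torsion_gens_eq:
  "{[(a, a), (a, b)] | a b. a \<in> Zp p \<and> b \<in> Zp p \<and> a < b}
    = gen_of_quad ` {t \<in> orbit_minima p. sigma1 t = t}"
proof -
  have minimum_iff: "t \<in> orbit_minima p \<and> sigma1 t = t \<longleftrightarrow>
      (\<exists>a b. t = (a, a, b, b) \<and> a \<in> Zp p \<and> b \<in> Zp p \<and> a < b)" for t
    by (cases t) (auto simp: orbit_minima_def Min_orbit_sigma1_fixed br_same_left)
  show ?thesis
  proof (intro equalityI subsetI)
    fix xs assume "xs \<in> {[(a, a), (a, b)] | a b. a \<in> Zp p \<and> b \<in> Zp p \<and> a < b}"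
    then obtain a b where "xs = gen_of_quad (a, a, b, b)" "a \<in> Zp p" "b \<in> Zp p" "a < b"
      by auto
    then show "xs \<in> gen_of_quad ` {t \<in> orbit_minima p. sigma1 t = t}"
      using minimum_iff[of "(a, a, b, b)"] by blast
  next
    fix xs assume "xs \<in> gen_of_quad ` {t \<in> orbit_minima p. sigma1 t = t}"
    then obtain t where "t \<in> orbit_minima p" "sigma1 t = t" "xs = gen_of_quad t"
      by blast
    then show "xs \<in> {[(a, a), (a, b)] | a b. a \<in> Zp p \<and> b \<in> Zp p \<and> a < b}"
      using minimum_iff[of t] by force
  qed
qed

theorem lemma3p2:
  fixes p :: int
  assumes "prime p" and "odd p"
  shows "cyclic_decomp (C_SLB p 2) (cls p 2)
           {[(a, b), (a, c)] | a b c. a \<in> Zp p \<and> b \<in> Zp p \<and> c \<in> Zp p \<and> a \<noteq> b \<and> b \<noteq> c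
                                \<and> is_lexmin (a, b, c, br p a b c) (Qset p a b c)}
           {[(a, a), (a, b)] | a b. a \<in> Zp p \<and> b \<in> Zp p \<and> a < b}
       \<and> cyclic_decomp (C_SLB p 1) (cls p 1)
           {[(a, b)] | a b. a \<in> Zp p \<and> b \<in> Zp p \<and> a < b}
           {[(a, a)] | a. a \<in> Zp p}"
proof
  show "cyclic_decomp (C_SLB p 2) (cls p 2)
           {[(a, b), (a, c)] | a b c. a \<in> Zp p \<and> b \<in> Zp p \<and> c \<in> Zp p \<and> a \<noteq> b \<and> b \<noteq> c
                                \<and> is_lexmin (a, b, c, br p a b c) (Qset p a b c)}
           {[(a, a), (a, b)] | a b. a \<in> Zp p \<and> b \<in> Zp p \<and> a < b}"
    unfolding lexmin_gens_eq torsion_gens_eq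
    using normal_form_presentation_2[OF \<open>odd p\<close>] by (rule cyclic_decomp_C_SLB)
  show "cyclic_decomp (C_SLB p 1) (cls p 1)
           {[(a, b)] | a b. a \<in> Zp p \<and> b \<in> Zp p \<and> a < b}
           {[(a, a)] | a. a \<in> Zp p}"
    using normal_form_presentation_1 by (rule cyclic_decomp_C_SLB)
qed

end
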